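(* Let $(S,K,I)$ be an active split graph with $\alpha=|I|$ and $\omega=|K|$, and suppose $\Phi(S)$ is simple and connected. Then: (1) $\omega\le\alpha$; (2) $S$ and $\Phi(S)$ have the same clique number; (3) if $\Phi(S)$ is complete, then $\deg(S)=\binom{\alpha}{2}$; (4) if $\Phi(S)$ is not complete, then $\left\lceil \tfrac{\alpha}{2}(\omega-1)\right\rceil\le \deg(S)<\binom{\alpha}{2}$.
   Context: All graphs are finite and simple. A split graph is a graph $S$ whose vertex set is a disjoint union $V(S)=K\,\dot\cup\,I$ with $K$ a clique and $I$ an independent set; $(K,I)$ is called a bipartition of $S$, and $(S,K,I)$ denotes $S$ together with this fixed bipartition. A 2-switch in a graph $G$ is performed on four distinct vertices $a,b,c,d$ with $ab,cd\in E(G)$ and $ac,bd\notin E(G)$: it deletes $ab,cd$ and adds $ac,bd$; $a,b,c,d$ are said to participate in it. A vertex is active in $G$ if it participates in some 2-switch on $G$; $G$ is active if all its vertices are active. For a split graph $(S,K,I)$ and distinct $u,v\in I$, $\sigma_{uv}(S)$ is the number of induced subgraphs of $S$ isomorphic to $P_4$ containing both $u$ and $v$. The factor graph $\Phi(S)$ is the loopless multigraph with vertex set $I$ having exactly $\sigma_{uv}(S)$ parallel edges between $u$ and $v$; it is simple if $\sigma_{uv}(S)\in\{0,1\}$ for all $u,v$. Graph notions (connected, complete, clique number, etc.) applied to $\Phi(S)$ refer to its underlying simple graph, in which $u\sim v$ iff $\sigma_{uv}(S)\ge1$. $\deg(S)$ denotes the number of induced subgraphs of $S$ isomorphic to $P_4$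 (equivalently, the number of 2-switches on $S$, or the number of edges of $\Phi(S)$ counted with multiplicity). *)

theory Defs
  imports Complex_Main
begin

definition simple_graph :: "'a set \<Rightarrow> ('a \<Rightarrow> 'a \<Rightarrow> bool) \<Rightarrow> bool" where
  "simple_graph V E \<longleftrightarrow> finite V \<and> (\<forall>x y. E x y \<longrightarrow> E y x)
     \<and> (\<forall>x. \<not> E x x) \<and> (\<forall>x y. E x y \<longrightarrow> x \<in> V \<and> y \<in> V)"

definition is_clique :: "('a \<Rightarrow> 'a \<Rightarrow> bool) \<Rightarrow> 'a set \<Rightarrow> bool" where
  "is_clique E C \<longleftrightarrow> (\<forall>x\<in>C. \<forall>y\<in>C. x \<noteq> y \<longrightarrow> E x y)"

definition is_independent :: "('a \<Rightarrow> 'a \<Rightarrow> bool) \<Rightarrow> 'a set \<Rightarrow> bool" where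
  "is_independent E A \<longleftrightarrow> (\<forall>x\<in>A. \<forall>y\<in>A. \<not> E x y)"

definition split_graph :: "'a set \<Rightarrow> ('a \<Rightarrow> 'a \<Rightarrow> bool) \<Rightarrow> 'a set \<Rightarrow> 'a set \<Rightarrow> bool" where
  "split_graph V E K I \<longleftrightarrow> simple_graph V E \<and> K \<union> I = V \<and> K \<inter> I = {}
     \<and> is_clique E K \<and> is_independent E I"

definition two_switch :: "'a set \<Rightarrow> ('a \<Rightarrow> 'a \<Rightarrow> bool) \<Rightarrow> 'a \<Rightarrow> 'a \<Rightarrow> 'a \<Rightarrow> 'a \<Rightarrow> bool" where
  "two_switch V E a b c d \<longleftrightarrow> a \<in> V \<and> b \<in> V \<and> c \<in> V \<and> d \<in> V \<and> distinct [a, b, c, d]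
     \<and> E a b \<and> E c d \<and> \<not> E a c \<and> \<not> E b d"

definition active_vertex :: "'a set \<Rightarrow> ('a \<Rightarrow> 'a \<Rightarrow> bool) \<Rightarrow> 'a \<Rightarrow> bool" where
  "active_vertex V E v \<longleftrightarrow> (\<exists>a b c d. two_switch V E a b c d \<and> v \<in> {a, b, c, d})"

definition active_graph :: "'a set \<Rightarrow> ('a \<Rightarrow> 'a \<Rightarrow> bool) \<Rightarrow> bool" where
  "active_graph V E \<longleftrightarrow> (\<forall>v\<in>V. active_vertex V E v)"

definition induces_P4 :: "('a \<Rightarrow> 'a \<Rightarrow> bool) \<Rightarrow> 'a set \<Rightarrow> bool" where
  "induces_P4 E X \<longleftrightarrow> (\<exists>a b c d. X = {a, b, c, d} \<and> distinct [a, b, c, d]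
     \<and> E a b \<and> E b c \<and> E c d \<and> \<not> E a c \<and> \<not> E b d \<and> \<not> E a d)"

definition deg :: "'a set \<Rightarrow> ('a \<Rightarrow> 'a \<Rightarrow> bool) \<Rightarrow> nat" where
  "deg V E = card {X. X \<subseteq> V \<and> induces_P4 E X}"

definition sigma :: "'a set \<Rightarrow> ('a \<Rightarrow> 'a \<Rightarrow> bool) \<Rightarrow> 'a \<Rightarrow> 'a \<Rightarrow> nat" where
  "sigma V E u v = card {X. X \<subseteq> V \<and> induces_P4 E X \<and> u \<in> X \<and> v \<in> X}"

text \<open>Underlying simple graph of the factor graph Phi(S), on vertex set I.\<close>
definition factor_adj :: "'a set \<Rightarrow> ('a \<Rightarrow> 'a \<Rightarrow> bool) \<Rightarrow> 'a set \<Rightarrow> 'a \<Rightarrow> 'a \<Rightarrow> bool" where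
  "factor_adj V E I u v \<longleftrightarrow> u \<in> I \<and> v \<in> I \<and> u \<noteq> v \<and> sigma V E u v \<ge> 1"

definition factor_simple :: "'a set \<Rightarrow> ('a \<Rightarrow> 'a \<Rightarrow> bool) \<Rightarrow> 'a set \<Rightarrow> bool" where
  "factor_simple V E I \<longleftrightarrow> (\<forall>u\<in>I. \<forall>v\<in>I. u \<noteq> v \<longrightarrow> sigma V E u v \<le> 1)"

definition graph_connected :: "'a set \<Rightarrow> ('a \<Rightarrow> 'a \<Rightarrow> bool) \<Rightarrow> bool" where
  "graph_connected V E \<longleftrightarrow>
     (\<forall>u\<in>V. \<forall>v\<in>V. (\<lambda>x y. x \<in> V \<and> y \<in> V \<and> E x y)\<^sup>*\<^sup>* u v)"

definition graph_complete :: "'a set \<Rightarrow> ('a \<Rightarrow> 'a \<Rightarrow> bool) \<Rightarrow> bool" where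
  "graph_complete V E \<longleftrightarrow> (\<forall>u\<in>V. \<forall>v\<in>V. u \<noteq> v \<longrightarrow> E u v)"

definition clique_number :: "'a set \<Rightarrow> ('a \<Rightarrow> 'a \<Rightarrow> bool) \<Rightarrow> nat" where
  "clique_number V E = Max {card C | C. C \<subseteq> V \<and> is_clique E C}"

end

theory Submission
  imports Defs
begin

(* For u in I let N(u) be its neighbourhood in K. The induced P4s through u, v in I are exactly
   the sets {u, b, c, v} with b in N(u) - N(v) and c in N(v) - N(u), so sigma_uv is
   |N(u) - N(v)| * |N(v) - N(u)|.
   Simplicity of Phi(S) says that adjacent vertices have neighbourhoods differing by swapping
   one element; along paths of Phi(S) this keeps |N(u)| constant, so Phi(S) is the complete
   multipartite graph whose parts are the classes of equal neighbourhoods, and deg(S) is its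
   number of edges. Activity makes the distinct neighbourhoods cover K with empty intersection.
   A family of sets pairwise differing by one swap either has a common core or a common hull,
   which here forces it to consist of all singletons or all co-singletons of K: there are
   exactly omega distinct neighbourhoods. Hence omega <= alpha, both clique numbers are omega,
   and every vertex of Phi(S) has degree at least omega - 1. *)

lemma swap_family_core_or_hull:
  assumes swap: "\<And>A B. A \<in> F \<Longrightarrow> B \<in> F \<Longrightarrow> A \<noteq> B \<Longrightarrow> card (A - B) = 1"
    and A: "A \<in> F" and B: "B \<in> F" and C: "C \<in> F" and "A \<noteq> B"
  shows "A \<inter> B \<subseteq> C \<or> C \<subseteq> A \<union> B"
proof (rule ccontr)
  have singleton: "S = {s}" if "card S = 1" "s \<in> S" for S and s :: 'a
    using that by (metis card_1_singletonE singletonD)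
  assume "\<not> ?thesis"
  then obtain m x where m: "m \<in> A" "m \<in> B" "m \<notin> C" and x: "x \<in> C" "x \<notin> A" "x \<notin> B"
    by blast
  have "C \<noteq> A" "C \<noteq> B"
    using m by blast+
  have "B - C = {m}"
    using singleton[OF swap[OF B C \<open>C \<noteq> B\<close>[symmetric]]] m by blast
  have "C - A = {x}"
    using singleton[OF swap[OF C A \<open>C \<noteq> A\<close>]] x by blast
  obtain b where b: "B - A = {b}"
    using swap[OF B A \<open>A \<noteq> B\<close>[symmetric]] by (rule card_1_singletonE)
  then have "b \<in> B" "b \<notin> A"
    by auto
  then have "b \<in> C"
    using \<open>B - C = {m}\<close> m by auto
  then show False
    using \<open>C - A = {x}\<close> \<open>b \<in> B\<close> \<open>b \<notin> A\<close> x by auto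
qed

lemma swap_family_common_core_or_common_hull:
  assumes swap: "\<And>A B. A \<in> F \<Longrightarrow> B \<in> F \<Longrightarrow> A \<noteq> B \<Longrightarrow> card (A - B) = 1"
    and A: "A \<in> F" and B: "B \<in> F" and "A \<noteq> B"
  shows "(\<forall>C\<in>F. A \<inter> B \<subseteq> C) \<or> (\<forall>C\<in>F. C \<subseteq> A \<union> B)"
proof (rule ccontr)
  assume "\<not> ?thesis"
  then obtain C D m x where C: "C \<in> F" "m \<in> A \<inter> B" "m \<notin> C" and D: "D \<in> F" "x \<in> D" "x \<notin> A \<union> B"
    by blast
  have "C \<subseteq> A \<union> B" "A \<inter> B \<subseteq> D"
    using swap_family_core_or_hull[OF swap A B _ \<open>A \<noteq> B\<close>] C D by blast+
  then have "{m, x} \<subseteq> D - C" "m \<noteq> x" "D \<noteq> C"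
    using C D by blast+
  moreover obtain w where "D - C = {w}"
    using swap[OF D(1) C(1) \<open>D \<noteq> C\<close>] by (rule card_1_singletonE)
  ultimately show False
    by auto
qed

lemma swap_family_card_eq:
  assumes swap: "\<And>A B. A \<in> F \<Longrightarrow> B \<in> F \<Longrightarrow> A \<noteq> B \<Longrightarrow> card (A - B) = 1"
    and "C \<in> F" "D \<in> F" "finite C" "finite D"
  shows "card C = card D"
proof (cases "C = D")
  case False
  have "card C = card (C \<inter> D) + card (C - D)" "card D = card (D \<inter> C) + card (D - C)"
    using assms(4,5) by (simp_all add: card_Int_Diff)
  then show ?thesis
    using swap assms(2,3) False by (simp add: Int_commute)
qed simp

lemma family_eq_singletons:
  assumes "\<And>C. C \<in> F \<Longrightarrow> card C = 1" and "\<Union>F = K"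
  shows "F = (\<lambda>k. {k}) ` K"
proof (intro equalityI subsetI)
  fix C
  assume "C \<in> F"
  then obtain k where "C = {k}"
    using assms(1) by (metis card_1_singletonE)
  then show "C \<in> (\<lambda>k. {k}) ` K"
    using \<open>C \<in> F\<close> assms(2) by auto
next
  fix S
  assume "S \<in> (\<lambda>k. {k}) ` K"
  then obtain k C where "S = {k}" "C \<in> F" "k \<in> C"
    using assms(2) by blast
  then show "S \<in> F"
    using assms(1) by (metis card_1_singletonE singletonD)
qed

lemma family_eq_cosingletons:
  assumes "F \<subseteq> Pow K" and "\<And>C. C \<in> F \<Longrightarrow> card (K - C) = 1" and "\<Inter>F = {}"
  shows "F = (\<lambda>k. K - {k}) ` K"
proof -
  have cosingleton: "C = K - {k}" if C: "C \<in> F" "k \<in> K" "k \<notin> C" for C k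
  proof -
    obtain k' where "K - C = {k'}"
      using assms(2)[OF C(1)] by (rule card_1_singletonE)
    moreover have "k' = k"
      using calculation C(2,3) by (metis Diff_iff singletonD)
    ultimately show ?thesis
      using C(1) assms(1) by auto
  qed
  show ?thesis
  proof (intro equalityI subsetI)
    fix C
    assume "C \<in> F"
    then obtain k where "k \<in> K" "k \<notin> C"
      using assms(2) by (metis Diff_iff card_1_singletonE insertI1)
    then show "C \<in> (\<lambda>k. K - {k}) ` K"
      using cosingleton \<open>C \<in> F\<close> by auto
  next
    fix S
    assume "S \<in> (\<lambda>k. K - {k}) ` K"
    then obtain k C where "S = K - {k}" "k \<in> K" "C \<in> F" "k \<notin> C"
      using assms(3) by blast
    then show "S \<in> F"
      using cosingleton by auto
  qed
qed

lemma card_swap_family: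
  assumes "finite K" and "K \<noteq> {}" and "F \<subseteq> Pow K" and "\<Union>F = K" and "\<Inter>F = {}"
    and swap: "\<And>A B. A \<in> F \<Longrightarrow> B \<in> F \<Longrightarrow> A \<noteq> B \<Longrightarrow> card (A - B) = 1"
  shows "card F = card K"
proof -
  have finite: "finite C" if "C \<in> F" for C
    using that assms(1,3) finite_subset by blast
  obtain A B where A: "A \<in> F" and B: "B \<in> F" and "A \<noteq> B"
  proof -
    obtain A where "A \<in> F"
      using assms(2,4) by blast
    moreover have "F \<noteq> {A}"
      using assms(2,4,5) by auto
    ultimately show thesis
      using that by blast
  qed
  have card_eq_A: "card C = card A" if "C \<in> F" for C
    using swap_family_card_eq[OF swap that A] finite that A by blast
  consider "\<forall>C\<in>F. A \<inter> B \<subseteq> C" | "\<forall>C\<in>F. C \<subseteq> A \<union> B"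
    using swap_family_common_core_or_common_hull[OF swap A B \<open>A \<noteq> B\<close>] by blast
  then show ?thesis
  proof cases
    case 1
    then have "A \<inter> B \<subseteq> \<Inter>F"
      by blast
    then have "card A = 1"
      using assms(5) swap[OF A B \<open>A \<noteq> B\<close>] by (simp add: Diff_triv)
    then have "F = (\<lambda>k. {k}) ` K"
      using family_eq_singletons card_eq_A assms(4) by metis
    then show ?thesis
      by (simp add: card_image)
  next
    case 2
    then have "K = A \<union> B"
      using A B assms(3,4) by blast
    then have "card K = Suc (card A)"
      using swap[OF B A] \<open>A \<noteq> B\<close> finite[OF A] finite[OF B] card_Un_disjoint[of A "B - A"] by simp
    then have "card (K - C) = 1" if "C \<in> F" for C
      using that card_eq_A assms(1,3) by (auto simp: card_Diff_subset finite)
    then have "F = (\<lambda>k. K - {k}) ` K"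
      using family_eq_cosingletons assms(3,5) by metis
    moreover have "inj_on (\<lambda>k. K - {k}) K"
      by (auto intro!: inj_onI)
    ultimately show ?thesis
      by (simp add: card_image)
  qed
qed

definition edge_set :: "('a \<Rightarrow> 'a \<Rightarrow> bool) \<Rightarrow> 'a set set" where
  "edge_set R = {{u, v} | u v. R u v}"

lemma edge_set_subset_two_subsets:
  assumes "simple_graph V R"
  shows "edge_set R \<subseteq> {P. P \<subseteq> V \<and> card P = 2}"
  using assms unfolding simple_graph_def edge_set_def by (auto simp: card_2_iff) metis

lemma edge_set_eq_two_subsets_iff:
  assumes "simple_graph V R"
  shows "edge_set R = {P. P \<subseteq> V \<and> card P = 2} \<longleftrightarrow> graph_complete V R"
proof
  assume edges: "edge_set R = {P. P \<subseteq> V \<and> card P = 2}"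
  show "graph_complete V R"
    unfolding graph_complete_def
  proof (intro ballI impI)
    fix u v
    assume "u \<in> V" "v \<in> V" "u \<noteq> v"
    then have "{u, v} \<in> edge_set R"
      using edges by simp
    then obtain x y where "{u, v} = {x, y}" "R x y"
      unfolding edge_set_def by blast
    then show "R u v"
      using assms unfolding simple_graph_def by (metis doubleton_eq_iff)
  qed
next
  assume "graph_complete V R"
  then have "{P. P \<subseteq> V \<and> card P = 2} \<subseteq> edge_set R"
    unfolding graph_complete_def edge_set_def by (fastforce simp: card_2_iff)
  then show "edge_set R = {P. P \<subseteq> V \<and> card P = 2}"
    using edge_set_subset_two_subsets[OF assms] by blast
qed

lemma card_edge_set_complete:
  assumes "simple_graph V R" and "graph_complete V R"
  shows "card (edge_set R) = card V choose 2"
proof -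
  have "finite V"
    using assms(1) unfolding simple_graph_def by blast
  then show ?thesis
    using edge_set_eq_two_subsets_iff[OF assms(1)] assms(2) n_subsets by simp
qed

lemma card_edge_set_not_complete:
  assumes "simple_graph V R" and "\<not> graph_complete V R"
  shows "card (edge_set R) < card V choose 2"
proof -
  have "finite V"
    using assms(1) unfolding simple_graph_def by blast
  have "edge_set R \<subset> {P. P \<subseteq> V \<and> card P = 2}"
    unfolding psubset_eq
    using edge_set_subset_two_subsets[OF assms(1)] edge_set_eq_two_subsets_iff[OF assms(1)] assms(2)
    by simp
  then have "card (edge_set R) < card {P. P \<subseteq> V \<and> card P = 2}"
    using \<open>finite V\<close> by (intro psubset_card_mono) auto
  then show ?thesis
    using n_subsets[OF \<open>finite V\<close>] by simp
qed

lemma handshake: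
  assumes "simple_graph V R"
  shows "(\<Sum>u\<in>V. card {v. R u v}) = 2 * card (edge_set R)"
proof -
  have "finite V" and sym: "\<And>u v. R u v \<Longrightarrow> R v u" and irrefl: "\<And>u. \<not> R u u"
    and in_V: "\<And>u v. R u v \<Longrightarrow> u \<in> V \<and> v \<in> V"
    using assms unfolding simple_graph_def by blast+
  define arcs :: "'a set \<Rightarrow> ('a \<times> 'a) set" where "arcs P = {(u, v). u \<in> P \<and> v \<in> P \<and> u \<noteq> v}" for P
  have "finite {P. P \<subseteq> V \<and> card P = 2}"
    using \<open>finite V\<close> by auto
  then have finite_edges: "finite (edge_set R)"
    using edge_set_subset_two_subsets[OF assms] finite_subset by blast
  have card_arcs: "card (arcs P) = 2" if P: "P \<in> edge_set R" for P
  proof -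
    obtain a b where "P = {a, b}" "a \<noteq> b"
      using P irrefl unfolding edge_set_def by blast
    then have "arcs P = {(a, b), (b, a)}"
      unfolding arcs_def by auto
    then show ?thesis
      using \<open>a \<noteq> b\<close> by simp
  qed
  have arcs_disjoint: "arcs P \<inter> arcs Q = {}" if "P \<in> edge_set R" "Q \<in> edge_set R" "P \<noteq> Q" for P Q
    using that unfolding edge_set_def arcs_def by (auto simp: doubleton_eq_iff)
  have "Sigma V (\<lambda>u. {v. R u v}) = \<Union> (arcs ` edge_set R)"
    unfolding edge_set_def arcs_def using sym irrefl in_V by (auto simp: doubleton_eq_iff) blast+
  moreover have "finite {v. R u v}" for u
    using \<open>finite V\<close> in_V by (auto intro: finite_subset)
  ultimately have "(\<Sum>u\<in>V. card {v. R u v}) = card (\<Union> (arcs ` edge_set R))"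
    using \<open>finite V\<close> card_SigmaI by metis
  also have "\<dots> = (\<Sum>P\<in>edge_set R. card (arcs P))"
    using finite_edges arcs_disjoint card_arcs
    by (intro card_UN_disjoint) (auto intro: card_ge_0_finite)
  also have "\<dots> = 2 * card (edge_set R)"
    using card_arcs by simp
  finally show ?thesis .
qed

lemma clique_number_complete_multipartite:
  assumes "finite V" and adj: "\<And>u v. u \<in> V \<Longrightarrow> v \<in> V \<Longrightarrow> u \<noteq> v \<Longrightarrow> R u v \<longleftrightarrow> f u \<noteq> f v"
  shows "clique_number V R = card (f ` V)"
  unfolding clique_number_def
proof (rule Max_eqI)
  have clique_iff: "is_clique R C \<longleftrightarrow> inj_on f C" if "C \<subseteq> V" for C
    using that adj unfolding is_clique_def inj_on_def by blast
  show "finite {card C | C. C \<subseteq> V \<and> is_clique R C}"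
    using \<open>finite V\<close> by simp
  show "y \<le> card (f ` V)" if "y \<in> {card C | C. C \<subseteq> V \<and> is_clique R C}" for y
    using that clique_iff \<open>finite V\<close> by (auto simp: card_image[symmetric] intro!: card_mono image_mono)
  let ?C = "inv_into V f ` f ` V"
  have "?C \<subseteq> V" "inj_on f ?C" "card ?C = card (f ` V)"
    by (auto intro!: inj_onI inv_into_into simp: card_image inj_on_inv_into f_inv_into_f)
  then show "card (f ` V) \<in> {card C | C. C \<subseteq> V \<and> is_clique R C}"
    using clique_iff by (auto intro!: exI[of _ ?C])
qed

locale split_bipartition =
  fixes V :: "'a set" and E :: "'a \<Rightarrow> 'a \<Rightarrow> bool" and K I :: "'a set"
  assumes split_graph: "split_graph V E K I"
begin

lemma finite_V: "finite V"
  and sym: "E x y \<Longrightarrow> E y x"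
  and V_eq: "V = K \<union> I"
  and K_I_disjoint: "K \<inter> I = {}"
  and clique_K: "is_clique E K"
  and edge_K: "x \<in> K \<Longrightarrow> y \<in> K \<Longrightarrow> x \<noteq> y \<Longrightarrow> E x y"
  and no_edge_I: "x \<in> I \<Longrightarrow> y \<in> I \<Longrightarrow> \<not> E x y"
  using split_graph
  unfolding split_graph_def simple_graph_def is_clique_def is_independent_def by blast+

lemma finite_K: "finite K" and finite_I: "finite I"
  using finite_V V_eq by auto

definition nbhd :: "'a \<Rightarrow> 'a set" where
  "nbhd u = {k \<in> K. E u k}"

lemma nbhd_subset_K: "nbhd u \<subseteq> K"
  unfolding nbhd_def by blast

lemma finite_nbhd: "finite (nbhd u)"
  using finite_K nbhd_subset_K by (rule finite_subset[rotated])

lemma induced_P4_split_form: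
  assumes "X \<subseteq> V" and "induces_P4 E X"
  obtains u v b c where "X = {u, b, c, v}" "u \<in> I" "v \<in> I"
    "b \<in> nbhd u - nbhd v" "c \<in> nbhd v - nbhd u"
proof -
  obtain a b c d where X: "X = {a, b, c, d}" "distinct [a, b, c, d]"
    and path: "E a b" "E b c" "E c d" and no_chord: "\<not> E a c" "\<not> E b d" "\<not> E a d"
    using assms(2) unfolding induces_P4_def by blast
  have in_V: "a \<in> V" "b \<in> V" "c \<in> V" "d \<in> V"
    using X assms(1) by auto
  \<comment> \<open>an end vertex in K would force its two non-neighbours into I, but they are adjacent\<close>
  have "a \<in> I"
  proof (rule ccontr)
    assume "a \<notin> I"
    then have "a \<in> K"
      using in_V V_eq by blast
    then have "c \<notin> K" "d \<notin> K"
      using edge_K[of a c] edge_K[of a d] X(2) no_chord by auto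
    then show False
      using in_V V_eq path(3) no_edge_I by blast
  qed
  have "d \<in> I"
  proof (rule ccontr)
    assume "d \<notin> I"
    then have "d \<in> K"
      using in_V V_eq by blast
    then have "a \<notin> K" "b \<notin> K"
      using edge_K[of a d] edge_K[of b d] X(2) no_chord by auto
    then show False
      using in_V V_eq path(1) no_edge_I by blast
  qed
  have "b \<in> K" "c \<in> K"
    using in_V V_eq path(1,3) no_edge_I[OF \<open>a \<in> I\<close>] no_edge_I[OF _ \<open>d \<in> I\<close>] by blast+
  then show thesis
    using that[OF X(1) \<open>a \<in> I\<close> \<open>d \<in> I\<close>] path no_chord sym unfolding nbhd_def by blast
qed

lemma induced_P4_split_intro:
  assumes "u \<in> I" "v \<in> I" "b \<in> nbhd u - nbhd v" "c \<in> nbhd v - nbhd u"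
  shows "{u, b, c, v} \<subseteq> V" "induces_P4 E {u, b, c, v}"
proof -
  have "b \<in> K" "c \<in> K" "b \<noteq> c" "u \<noteq> v"
    using assms unfolding nbhd_def by auto
  then show "{u, b, c, v} \<subseteq> V"
    using assms(1,2) V_eq by blast
  have "distinct [u, b, c, v]"
    using assms(1,2) \<open>b \<in> K\<close> \<open>c \<in> K\<close> \<open>b \<noteq> c\<close> \<open>u \<noteq> v\<close> K_I_disjoint by auto
  moreover have "E u b" "E b c" "E c v" "\<not> E u c" "\<not> E b v" "\<not> E u v"
    using assms \<open>b \<in> K\<close> \<open>c \<in> K\<close> \<open>b \<noteq> c\<close> edge_K no_edge_I sym unfolding nbhd_def by auto
  ultimately show "induces_P4 E {u, b, c, v}"
    unfolding induces_P4_def by blast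
qed

lemma induced_P4_split_inter_I:
  assumes "b \<in> nbhd u - nbhd v" "c \<in> nbhd v - nbhd u"
  shows "{u, b, c, v} \<inter> I = {u, v} \<inter> I"
  using assms K_I_disjoint unfolding nbhd_def by auto

lemma inj_on_induced_P4_split:
  assumes "u \<in> I" "v \<in> I"
  shows "inj_on (\<lambda>(b, c). {u, b, c, v}) ((nbhd u - nbhd v) \<times> (nbhd v - nbhd u))"
proof (rule inj_onI, clarify)
  fix b c b' c'
  assume "b \<in> nbhd u" "b \<notin> nbhd v" "c \<in> nbhd v" "c \<notin> nbhd u"
    "b' \<in> nbhd u" "b' \<notin> nbhd v" "c' \<in> nbhd v" "c' \<notin> nbhd u"
    and eq: "{u, b, c, v} = {u, b', c', v}"
  then have "b \<notin> {u, v, c'}" "c \<notin> {u, v, b'}"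
    using assms K_I_disjoint unfolding nbhd_def by auto
  then show "b = b' \<and> c = c'"
    using eq by (metis insert_iff)
qed

lemma induced_P4s_through_eq:
  assumes u: "u \<in> I" and v: "v \<in> I" and "u \<noteq> v"
  shows "{X. X \<subseteq> V \<and> induces_P4 E X \<and> u \<in> X \<and> v \<in> X} =
    (\<lambda>(b, c). {u, b, c, v}) ` ((nbhd u - nbhd v) \<times> (nbhd v - nbhd u))"
proof (intro equalityI subsetI)
  fix X
  assume "X \<in> (\<lambda>(b, c). {u, b, c, v}) ` ((nbhd u - nbhd v) \<times> (nbhd v - nbhd u))"
  then show "X \<in> {X. X \<subseteq> V \<and> induces_P4 E X \<and> u \<in> X \<and> v \<in> X}"
    using induced_P4_split_intro[OF u v] by auto
next
  fix X
  assume "X \<in> {X. X \<subseteq> V \<and> induces_P4 E X \<and> u \<in> X \<and> v \<in> X}"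
  then have "X \<subseteq> V" "induces_P4 E X" "u \<in> X" "v \<in> X"
    by auto
  obtain u' v' b c where X: "X = {u', b, c, v'}" "u' \<in> I" "v' \<in> I"
    and b: "b \<in> nbhd u' - nbhd v'" and c: "c \<in> nbhd v' - nbhd u'"
    by (rule induced_P4_split_form[OF \<open>X \<subseteq> V\<close> \<open>induces_P4 E X\<close>])
  have "u \<in> {u', v'}" "v \<in> {u', v'}"
    using \<open>u \<in> X\<close> \<open>v \<in> X\<close> induced_P4_split_inter_I[OF b c] X u v by auto
  then consider "u' = u" "v' = v" | "u' = v" "v' = u"
    using \<open>u \<noteq> v\<close> by auto
  then show "X \<in> (\<lambda>(b, c). {u, b, c, v}) ` ((nbhd u - nbhd v) \<times> (nbhd v - nbhd u))"
  proof cases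
    case 1
    then show ?thesis
      using X(1) b c by (auto intro!: image_eqI[of _ _ "(b, c)"])
  next
    case 2
    then show ?thesis
      using X(1) b c by (auto intro!: image_eqI[of _ _ "(c, b)"])
  qed
qed

lemma sigma_eq_card_nbhd_diff:
  assumes "u \<in> I" "v \<in> I" "u \<noteq> v"
  shows "sigma V E u v = card (nbhd u - nbhd v) * card (nbhd v - nbhd u)"
  unfolding sigma_def induced_P4s_through_eq[OF assms]
  by (simp add: card_image[OF inj_on_induced_P4_split[OF assms(1,2)]] card_cartesian_product)

lemma factor_adj_iff_incomparable:
  "factor_adj V E I u v \<longleftrightarrow>
     u \<in> I \<and> v \<in> I \<and> u \<noteq> v \<and> \<not> nbhd u \<subseteq> nbhd v \<and> \<not> nbhd v \<subseteq> nbhd u"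
proof -
  have "1 \<le> card (nbhd u - nbhd v) * card (nbhd v - nbhd u) \<longleftrightarrow>
      \<not> nbhd u \<subseteq> nbhd v \<and> \<not> nbhd v \<subseteq> nbhd u"
    using finite_nbhd by (simp add: Suc_le_eq card_gt_0_iff)
  then show ?thesis
    unfolding factor_adj_def using sigma_eq_card_nbhd_diff by auto
qed

lemma induced_P4_inter_I:
  assumes "X \<subseteq> V" "induces_P4 E X"
  obtains u v where "X \<inter> I = {u, v}" "factor_adj V E I u v"
proof -
  obtain u v b c where X: "X = {u, b, c, v}" "u \<in> I" "v \<in> I"
    and b: "b \<in> nbhd u - nbhd v" and c: "c \<in> nbhd v - nbhd u"
    using assms by (rule induced_P4_split_form)
  then have "X \<inter> I = {u, v}"
    using induced_P4_split_inter_I[OF b c] by auto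
  moreover have "factor_adj V E I u v"
    using X(2,3) b c factor_adj_iff_incomparable by auto
  ultimately show thesis
    using that by blast
qed

lemma simple_graph_factor: "simple_graph I (factor_adj V E I)"
  unfolding simple_graph_def using finite_I factor_adj_iff_incomparable by blast

lemma clique_number_eq_card_K:
  assumes "\<And>u. u \<in> I \<Longrightarrow> nbhd u \<noteq> K"
  shows "clique_number V E = card K"
  unfolding clique_number_def
proof (rule Max_eqI)
  show "finite {card C | C. C \<subseteq> V \<and> is_clique E C}"
    using finite_V by simp
  show "card K \<in> {card C | C. C \<subseteq> V \<and> is_clique E C}"
    using V_eq clique_K by blast
  fix y
  assume "y \<in> {card C | C. C \<subseteq> V \<and> is_clique E C}"
  then obtain C where y: "y = card C" and C: "C \<subseteq> V" "is_clique E C"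
    by blast
  show "y \<le> card K"
  proof (cases "C \<subseteq> K")
    case True
    then show ?thesis
      using y finite_K card_mono by blast
  next
    case False
    then obtain u where u: "u \<in> C" "u \<in> I"
      using C(1) V_eq by blast
    have "C - {u} \<subseteq> nbhd u"
      using C u V_eq no_edge_I sym unfolding is_clique_def nbhd_def by blast
    then have "card C - 1 \<le> card (nbhd u)"
      using finite_nbhd by (metis card_Diff_singleton_if card_mono u(1))
    moreover have "card (nbhd u) < card K"
      using assms[OF u(2)] nbhd_subset_K finite_K by (simp add: psubset_card_mono psubset_eq)
    moreover have "finite C"
      using C(1) finite_V finite_subset by blast
    ultimately show ?thesis
      using y u(1) card_gt_0_iff by fastforce
  qed
qed

lemma two_switch_split_form:
  assumes "two_switch V E a b c d"
  shows "(a \<in> K \<and> b \<in> I \<and> c \<in> I \<and> d \<in> K) \<or> (a \<in> I \<and> b \<in> K \<and> c \<in> K \<and> d \<in> I)"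
proof -
  have in_V: "a \<in> V" "b \<in> V" "c \<in> V" "d \<in> V" and "distinct [a, b, c, d]"
    and edges: "E a b" "E c d" and non_edges: "\<not> E a c" "\<not> E b d"
    using assms unfolding two_switch_def by blast+
  show ?thesis
  proof (cases "a \<in> K")
    case True
    then have "c \<in> I"
      using in_V V_eq edge_K[of a c] \<open>distinct [a, b, c, d]\<close> non_edges by auto
    then have "d \<in> K"
      using in_V V_eq no_edge_I edges by blast
    then have "b \<in> I"
      using in_V V_eq edge_K[of b d] \<open>distinct [a, b, c, d]\<close> non_edges by auto
    then show ?thesis
      using \<open>a \<in> K\<close> \<open>c \<in> I\<close> \<open>d \<in> K\<close> by blast
  next
    case False
    then have "a \<in> I"
      using in_V V_eq by blast
    then have "b \<in> K"
      using in_V V_eq no_edge_I edges by blast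
    then have "d \<in> I"
      using in_V V_eq edge_K[of b d] \<open>distinct [a, b, c, d]\<close> non_edges by auto
    then have "c \<in> K"
      using in_V V_eq no_edge_I edges by blast
    then show ?thesis
      using \<open>a \<in> I\<close> \<open>b \<in> K\<close> \<open>d \<in> I\<close> by blast
  qed
qed

lemma active_vertex_in_K:
  assumes "active_vertex V E k" and "k \<in> K"
  shows "\<exists>u\<in>I. k \<in> nbhd u" and "\<exists>v\<in>I. k \<notin> nbhd v"
proof -
  obtain a b c d where sw: "two_switch V E a b c d" and k: "k \<in> {a, b, c, d}"
    using assms(1) unfolding active_vertex_def by blast
  have "E a b" "E c d" "\<not> E a c" "\<not> E b d"
    using sw unfolding two_switch_def by blast+
  with two_switch_split_form[OF sw] k assms(2) K_I_disjoint sym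
  show "\<exists>u\<in>I. k \<in> nbhd u" "\<exists>v\<in>I. k \<notin> nbhd v"
    unfolding nbhd_def by auto
qed

lemma active_vertex_in_I:
  assumes "active_vertex V E u" and "u \<in> I"
  shows "nbhd u \<noteq> K"
proof -
  obtain a b c d where sw: "two_switch V E a b c d" and u: "u \<in> {a, b, c, d}"
    using assms(1) unfolding active_vertex_def by blast
  have "\<not> E a c" "\<not> E b d"
    using sw unfolding two_switch_def by blast+
  with two_switch_split_form[OF sw] u assms(2) K_I_disjoint sym
  show ?thesis
    unfolding nbhd_def by auto
qed

end

locale simple_factor = split_bipartition +
  assumes factor_simple: "factor_simple V E I"
begin

lemma card_nbhd_diff_factor_adj:
  assumes "factor_adj V E I u v"
  shows "card (nbhd u - nbhd v) = 1"
proof -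
  have uv: "u \<in> I" "v \<in> I" "u \<noteq> v"
    and "nbhd u - nbhd v \<noteq> {}" "nbhd v - nbhd u \<noteq> {}"
    using assms factor_adj_iff_incomparable by auto
  then have "card (nbhd u - nbhd v) \<noteq> 0" "card (nbhd v - nbhd u) \<noteq> 0"
    using finite_nbhd by auto
  moreover have "card (nbhd u - nbhd v) * card (nbhd v - nbhd u) \<le> 1"
    using factor_simple uv sigma_eq_card_nbhd_diff unfolding factor_simple_def by metis
  ultimately show ?thesis
    by (simp add: le_Suc_eq)
qed

lemma induced_P4_unique:
  assumes "u \<in> I" "v \<in> I" "u \<noteq> v"
    and "X \<subseteq> V" "induces_P4 E X" "u \<in> X" "v \<in> X"
    and "Y \<subseteq> V" "induces_P4 E Y" "u \<in> Y" "v \<in> Y"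
  shows "X = Y"
proof -
  let ?P4s = "{X. X \<subseteq> V \<and> induces_P4 E X \<and> u \<in> X \<and> v \<in> X}"
  have "finite ?P4s"
    using finite_V by simp
  moreover have "card ?P4s \<le> 1"
    using factor_simple assms(1-3) unfolding factor_simple_def sigma_def by blast
  ultimately show ?thesis
    using assms(4-) by (auto simp: card_le_Suc0_iff_eq)
qed

lemma deg_eq_card_edge_set: "deg V E = card (edge_set (factor_adj V E I))"
proof -
  let ?P4s = "{X. X \<subseteq> V \<and> induces_P4 E X}"
  have "bij_betw (\<lambda>X. X \<inter> I) ?P4s (edge_set (factor_adj V E I))"
  proof (rule bij_betw_imageI)
    show "inj_on (\<lambda>X. X \<inter> I) ?P4s"
    proof (rule inj_onI)
      fix X Y
      assume X: "X \<in> ?P4s" and Y: "Y \<in> ?P4s" and eq: "X \<inter> I = Y \<inter> I"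
      from X have "X \<subseteq> V" "induces_P4 E X"
        by auto
      then obtain u v where "X \<inter> I = {u, v}" "factor_adj V E I u v"
        by (rule induced_P4_inter_I)
      then show "X = Y"
        using induced_P4_unique[of u v X Y] X Y eq factor_adj_iff_incomparable by auto
    qed
    show "(\<lambda>X. X \<inter> I) ` ?P4s = edge_set (factor_adj V E I)"
    proof (intro equalityI subsetI)
      fix P
      assume "P \<in> (\<lambda>X. X \<inter> I) ` ?P4s"
      then obtain X where X: "X \<subseteq> V" "induces_P4 E X" and P: "P = X \<inter> I"
        by blast
      obtain u v where "X \<inter> I = {u, v}" "factor_adj V E I u v"
        using X by (rule induced_P4_inter_I)
      then show "P \<in> edge_set (factor_adj V E I)"
        unfolding edge_set_def P by blast
    next
      fix P
      assume "P \<in> edge_set (factor_adj V E I)"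
      then obtain u v where P: "P = {u, v}" and adj: "factor_adj V E I u v"
        unfolding edge_set_def by blast
      then obtain b c where uv: "u \<in> I" "v \<in> I"
        and b: "b \<in> nbhd u - nbhd v" and c: "c \<in> nbhd v - nbhd u"
        using factor_adj_iff_incomparable by blast
      have "{u, b, c, v} \<in> ?P4s"
        using induced_P4_split_intro[OF uv b c] by blast
      moreover have "{u, b, c, v} \<inter> I = P"
        using induced_P4_split_inter_I[OF b c] P uv by auto
      ultimately show "P \<in> (\<lambda>X. X \<inter> I) ` ?P4s"
        by blast
    qed
  qed
  then show ?thesis
    unfolding deg_def by (rule bij_betw_same_card)
qed

end

locale connected_factor = simple_factor +
  assumes factor_connected: "graph_connected I (factor_adj V E I)"
begin

lemma card_nbhd_eq:
  assumes "u \<in> I" "v \<in> I"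
  shows "card (nbhd u) = card (nbhd v)"
proof -
  have "(\<lambda>x y. x \<in> I \<and> y \<in> I \<and> factor_adj V E I x y)\<^sup>*\<^sup>* u v"
    using factor_connected assms unfolding graph_connected_def by blast
  then show ?thesis
  proof (induction rule: rtranclp_induct)
    case (step x y)
    have "card (nbhd x) = card (nbhd x \<inter> nbhd y) + card (nbhd x - nbhd y)"
      "card (nbhd y) = card (nbhd y \<inter> nbhd x) + card (nbhd y - nbhd x)"
      using finite_nbhd by (simp_all add: card_Int_Diff)
    moreover have "factor_adj V E I x y" "factor_adj V E I y x"
      using step.hyps(2) simple_graph_factor unfolding simple_graph_def by blast+
    ultimately show ?case
      using step.IH card_nbhd_diff_factor_adj by (simp add: Int_commute)
  qed simp
qed

lemma factor_adj_iff_nbhd_neq: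
  assumes "u \<in> I" "v \<in> I" "u \<noteq> v"
  shows "factor_adj V E I u v \<longleftrightarrow> nbhd u \<noteq> nbhd v"
proof -
  have card_eq: "card (nbhd u) = card (nbhd v)"
    using card_nbhd_eq[OF assms(1,2)] .
  have "nbhd u \<subseteq> nbhd v \<longleftrightarrow> nbhd u = nbhd v" "nbhd v \<subseteq> nbhd u \<longleftrightarrow> nbhd u = nbhd v"
    using card_subset_eq[OF finite_nbhd _ card_eq] card_subset_eq[OF finite_nbhd _ card_eq[symmetric]]
    by auto
  then show ?thesis
    using assms factor_adj_iff_incomparable by simp
qed

lemma clique_number_factor: "clique_number I (factor_adj V E I) = card (nbhd ` I)"
  using finite_I factor_adj_iff_nbhd_neq by (rule clique_number_complete_multipartite)

end

locale active_connected_factor = connected_factor +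
  assumes active: "active_graph V E"
begin

lemma card_nbhd_image: "card (nbhd ` I) = card K"
proof (cases "K = {}")
  case True
  have "I = {}"
  proof (rule ccontr)
    assume "I \<noteq> {}"
    then obtain u where "u \<in> I"
      by blast
    then have "nbhd u \<noteq> K"
      using active active_vertex_in_I V_eq unfolding active_graph_def by blast
    then show False
      using nbhd_subset_K True by blast
  qed
  then show ?thesis
    using True by simp
next
  case False
  have covered: "\<exists>u\<in>I. k \<in> nbhd u" and missed: "\<exists>v\<in>I. k \<notin> nbhd v" if "k \<in> K" for k
  proof -
    have "active_vertex V E k"
      using active that V_eq unfolding active_graph_def by blast
    then show "\<exists>u\<in>I. k \<in> nbhd u" "\<exists>v\<in>I. k \<notin> nbhd v"
      using active_vertex_in_K that by blast+
  qed
  show ?thesis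
  proof (rule card_swap_family)
    show "nbhd ` I \<subseteq> Pow K"
      using nbhd_subset_K by blast
    show "\<Union> (nbhd ` I) = K"
      using covered nbhd_subset_K by blast
    have "I \<noteq> {}"
      using False covered by blast
    then have "\<Inter> (nbhd ` I) \<subseteq> K"
      using nbhd_subset_K by blast
    then show "\<Inter> (nbhd ` I) = {}"
      using missed by blast
    fix A B
    assume "A \<in> nbhd ` I" "B \<in> nbhd ` I" "A \<noteq> B"
    then obtain u v where uv: "u \<in> I" "v \<in> I" "u \<noteq> v" and AB: "A = nbhd u" "B = nbhd v"
      by blast
    then have "factor_adj V E I u v"
      using factor_adj_iff_nbhd_neq \<open>A \<noteq> B\<close> by simp
    then show "card (A - B) = 1"
      using card_nbhd_diff_factor_adj AB by simp
  qed (use finite_K False in auto)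
qed

lemma card_K_le_card_I: "card K \<le> card I"
  using card_nbhd_image card_image_le[OF finite_I] by metis

lemma clique_numbers_eq: "clique_number V E = clique_number I (factor_adj V E I)"
  using clique_number_eq_card_K active_vertex_in_I active V_eq clique_number_factor card_nbhd_image
  unfolding active_graph_def by auto

lemma card_I_mult_le_twice_deg: "card I * (card K - 1) \<le> 2 * deg V E"
proof -
  have "card K - 1 \<le> card {v. factor_adj V E I u v}" if u: "u \<in> I" for u
  proof -
    have "factor_adj V E I u v \<longleftrightarrow> v \<in> I \<and> nbhd v \<noteq> nbhd u" for v
    proof (cases "v \<in> I \<and> u \<noteq> v")
      case True
      then show ?thesis
        using factor_adj_iff_nbhd_neq[OF u] by auto
    next
      case False
      then show ?thesis
        using factor_adj_iff_incomparable by auto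
    qed
    then have nbrs: "{v. factor_adj V E I u v} = {v \<in> I. nbhd v \<noteq> nbhd u}"
      by blast
    have "card K - 1 = card (nbhd ` I - {nbhd u})"
      using u finite_I card_nbhd_image by (simp add: card_Diff_singleton)
    also have "nbhd ` I - {nbhd u} = nbhd ` {v \<in> I. nbhd v \<noteq> nbhd u}"
      by auto
    also have "card \<dots> \<le> card {v \<in> I. nbhd v \<noteq> nbhd u}"
      using finite_I by (intro card_image_le) simp
    finally show ?thesis
      using nbrs by simp
  qed
  then have "card I * (card K - 1) \<le> (\<Sum>u\<in>I. card {v. factor_adj V E I u v})"
    using sum_bounded_below[of I "card K - 1"] by simp
  also have "\<dots> = 2 * deg V E"
    using handshake[OF simple_graph_factor] deg_eq_card_edge_set by simp
  finally show ?thesis .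
qed

end

theorem corollary5p3:
  fixes V K I :: "'a set" and E :: "'a \<Rightarrow> 'a \<Rightarrow> bool"
  assumes split: "split_graph V E K I"
    and active: "active_graph V E"
    and simp: "factor_simple V E I"
    and conn: "graph_connected I (factor_adj V E I)"
  shows "card K \<le> card I
    \<and> clique_number V E = clique_number I (factor_adj V E I)
    \<and> (graph_complete I (factor_adj V E I) \<longrightarrow> deg V E = card I choose 2)
    \<and> (\<not> graph_complete I (factor_adj V E I) \<longrightarrow>
           ceiling (real (card I) / 2 * (real (card K) - 1)) \<le> int (deg V E)
           \<and> deg V E < card I choose 2)"
proof -
  interpret active_connected_factor V E K I
    using assms by unfold_locales
  \<comment> \<open>an inequality only, since the natural subtraction truncates when K is empty\<close>
  have "real (card I) * (real (card K) - 1) \<le> real (card I * (card K - 1))"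
    by (cases "card K") simp_all
  also have "\<dots> \<le> 2 * real (deg V E)"
    using of_nat_mono[OF card_I_mult_le_twice_deg] by simp
  finally have "ceiling (real (card I) / 2 * (real (card K) - 1)) \<le> int (deg V E)"
    by (intro ceiling_le) simp
  then show ?thesis
    using card_K_le_card_I clique_numbers_eq deg_eq_card_edge_set
      card_edge_set_complete[OF simple_graph_factor] card_edge_set_not_complete[OF simple_graph_factor]
    by simp
qed

end
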